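(* Let $\mathcal U=\{\mathbf u\in\mathbb R^n:\mathbf u^L\le\mathbf u\le\mathbf u^U\}$ with $0\le u^L_i<u^U_i<\infty$ for all $i$, and let $\widehat{\mathbf u}^j\in\mathcal U$. Given $p\ge1$, $\rho\ge0$ and $\mathbf s\in\mathcal S$, let $\omega_j(\rho,\mathbf s)=\sup_{\mathbf u\in\mathcal U}\{f(\mathbf s,\mathbf u)-\rho\|\mathbf u-\widehat{\mathbf u}^j\|_p^p\}$. Then $$\omega_j(\rho,\mathbf s)=\max_{\mathbf t}\ \sum_{k=1}^n\sum_{\ell=k}^{n+1}\Big(\sum_{i=k}^{\min\{\ell,n\}}z_{i\ell j}\Big)t_{k\ell}\quad\text{s.t.}\quad\sum_{k=1}^i\sum_{\ell=i}^{n+1}t_{k\ell}=1\ \ \forall i\in[n],\quad t_{k\ell}\ge0\ \ \forall k\in[n],\ \ell\in[k,n+1]_{\mathbb Z},$$ where, for $i\in[n]$ and $\ell\in[i,n+1]_{\mathbb Z}$, $z_{i\ell j}=-s_i\pi_{i\ell}+\sup_{u^L_i\le u_i\le u^U_i}\{\pi_{i\ell}u_i-\rho|u_i-\widehat u^j_i|^p\}$, with $\pi_{i\ell}=-d_\ell+\sum_{q=i+1}^\ell c_q$ if $\ell\in[i,n]_{\mathbb Z}$ and $\pi_{i,n+1}=C+\sum_{q=i+1}^nc_q$.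
   Context: Notation: $[m]=\{1,\dots,m\}$, $[i,j]_{\mathbb Z}=\{i,\dots,j\}$. $n\ge1$, $T>0$, $\mathcal S=\{\mathbf s\in\mathbb R^n:\mathbf s\ge0,\sum_is_i\le T\}$; costs $\mathbf c,\mathbf d\in\mathbb R^n_+$, $C\ge0$ with $d_{i+1}-d_i\le c_{i+1}$ ($i\in[n-1]$). $f(\mathbf s,\mathbf u)$ is the optimal value of $\min_{\mathbf w\in\mathbb R^{n+1},\mathbf v\in\mathbb R^n}\sum_{i=1}^n(c_iw_i+d_iv_i)+Cw_{n+1}$ s.t. $w_i-v_{i-1}=u_{i-1}+w_{i-1}-s_{i-1}$ ($i\in[2,n+1]_{\mathbb Z}$), $\mathbf w\ge0,w_1=0,\mathbf v\ge0$. *)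

theory Defs
  imports "HOL-Analysis.Analysis"
begin

text \<open>Vectors in R^n are functions nat => real, used on indices 1..n only.\<close>

text \<open>Feasibility of (w,v) in the LP defining f(s,u); w is indexed 1..n+1, v by 1..n.\<close>
definition lp_feasible :: "nat \<Rightarrow> (nat \<Rightarrow> real) \<Rightarrow> (nat \<Rightarrow> real)
    \<Rightarrow> (nat \<Rightarrow> real) \<Rightarrow> (nat \<Rightarrow> real) \<Rightarrow> bool" where
  "lp_feasible n s u w v \<longleftrightarrow>
     (\<forall>i\<in>{2..n+1}. w i - v (i-1) = u (i-1) + w (i-1) - s (i-1)) \<and>
     (\<forall>i\<in>{1..n+1}. w i \<ge> 0) \<and> w 1 = 0 \<and> (\<forall>i\<in>{1..n}. v i \<ge> 0)"

definition lp_obj :: "nat \<Rightarrow> (nat \<Rightarrow> real) \<Rightarrow> (nat \<Rightarrow> real) \<Rightarrow> real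
    \<Rightarrow> (nat \<Rightarrow> real) \<Rightarrow> (nat \<Rightarrow> real) \<Rightarrow> real" where
  "lp_obj n c d C w v = (\<Sum>i=1..n. c i * w i + d i * v i) + C * w (n+1)"

definition f_val :: "nat \<Rightarrow> (nat \<Rightarrow> real) \<Rightarrow> (nat \<Rightarrow> real) \<Rightarrow> real
    \<Rightarrow> (nat \<Rightarrow> real) \<Rightarrow> (nat \<Rightarrow> real) \<Rightarrow> real" where
  "f_val n c d C s u = Inf {lp_obj n c d C w v | w v. lp_feasible n s u w v}"

definition omega :: "nat \<Rightarrow> (nat \<Rightarrow> real) \<Rightarrow> (nat \<Rightarrow> real) \<Rightarrow> real
    \<Rightarrow> (nat \<Rightarrow> real) \<Rightarrow> (nat \<Rightarrow> real) \<Rightarrow> (nat \<Rightarrow> real) \<Rightarrow> real \<Rightarrow> real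
    \<Rightarrow> (nat \<Rightarrow> real) \<Rightarrow> real" where
  "omega n c d C uL uU uhat p \<rho> s =
     Sup {f_val n c d C s u - \<rho> * (\<Sum>i=1..n. \<bar>u i - uhat i\<bar> powr p) | u.
            \<forall>i\<in>{1..n}. uL i \<le> u i \<and> u i \<le> uU i}"

definition pi_coef :: "nat \<Rightarrow> (nat \<Rightarrow> real) \<Rightarrow> (nat \<Rightarrow> real) \<Rightarrow> real
    \<Rightarrow> nat \<Rightarrow> nat \<Rightarrow> real" where
  "pi_coef n c d C i l =
     (if l \<le> n then - d l + (\<Sum>q=i+1..l. c q) else C + (\<Sum>q=i+1..n. c q))"

definition z_coef :: "nat \<Rightarrow> (nat \<Rightarrow> real) \<Rightarrow> (nat \<Rightarrow> real) \<Rightarrow> real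
    \<Rightarrow> (nat \<Rightarrow> real) \<Rightarrow> (nat \<Rightarrow> real) \<Rightarrow> (nat \<Rightarrow> real) \<Rightarrow> real \<Rightarrow> real
    \<Rightarrow> (nat \<Rightarrow> real) \<Rightarrow> nat \<Rightarrow> nat \<Rightarrow> real" where
  "z_coef n c d C uL uU uhat p \<rho> s i l =
     - s i * pi_coef n c d C i l +
     Sup {pi_coef n c d C i l * x - \<rho> * \<bar>x - uhat i\<bar> powr p | x. uL i \<le> x \<and> x \<le> uU i}"

definition t_feasible :: "nat \<Rightarrow> (nat \<Rightarrow> nat \<Rightarrow> real) \<Rightarrow> bool" where
  "t_feasible n t \<longleftrightarrow>
     (\<forall>i\<in>{1..n}. (\<Sum>k=1..i. \<Sum>l=i..n+1. t k l) = 1) \<and>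
     (\<forall>k\<in>{1..n}. \<forall>l\<in>{k..n+1}. t k l \<ge> 0)"

definition t_obj :: "nat \<Rightarrow> (nat \<Rightarrow> nat \<Rightarrow> real) \<Rightarrow> (nat \<Rightarrow> nat \<Rightarrow> real) \<Rightarrow> real" where
  "t_obj n z t = (\<Sum>k=1..n. \<Sum>l=k..n+1. (\<Sum>i=k..min l n. z i l) * t k l)"

end

theory Submission
  imports Defs
begin

(*
  The dual prices of the LP defining f(s,u) can be taken of the form pi_coef i (L i) for a block
  labeling L: the periods fall into consecutive blocks [k..min l n], and every period of such a
  block uses the price index l. Weak duality makes each labeling a lower bound for f(s,u), and
  Lindley's recursion for w, cut into busy periods, is a primal solution attaining one of them;
  hence f(s,u) = max_L sum_i pi_coef i (L i) * (u i - s i). The penalty is separable, so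
  omega = max_L sum_i z i (L i). A labeling is also a 0-1 solution t of the LP in t with the same
  value, and the increments of the backward dynamic-programming values
  max_L sum_{i >= k} z i (L i) form a dual solution showing that no fractional t does better.
  Besides the conditions on the costs, only uL < uU and p > 0 are used.
*)

lemma sum_triangle_swap:
  fixes f :: "nat \<Rightarrow> nat \<Rightarrow> 'a::comm_monoid_add"
  shows "(\<Sum>k=a..b. \<Sum>i=k..b. f k i) = (\<Sum>i=a..b. \<Sum>k=a..i. f k i)"
proof -
  have "(\<Sum>k=a..b. \<Sum>i=k..b. f k i) = (\<Sum>k\<in>{a..b}. \<Sum>i\<in>{i. i \<in> {a..b} \<and> k \<le> i}. f k i)"
    by (intro sum.cong) auto
  also have "\<dots> = (\<Sum>i\<in>{a..b}. \<Sum>k\<in>{k. k \<in> {a..b} \<and> k \<le> i}. f k i)"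
    by (rule sum.swap_restrict) simp_all
  also have "\<dots> = (\<Sum>i=a..b. \<Sum>k=a..i. f k i)"
    by (intro sum.cong) auto
  finally show ?thesis .
qed

lemma sum_interval_cover_swap:
  fixes g :: "nat \<Rightarrow> nat \<Rightarrow> nat \<Rightarrow> 'a::comm_monoid_add"
  shows "(\<Sum>k=1..n. \<Sum>l=k..n+1. \<Sum>i=k..min l n. g k l i) =
         (\<Sum>i=1..n. \<Sum>k=1..i. \<Sum>l=i..n+1. g k l i)"
proof -
  have inner: "(\<Sum>l=k..n+1. \<Sum>i=k..min l n. g k l i) = (\<Sum>i=k..n. \<Sum>l=i..n+1. g k l i)" for k
  proof -
    have "(\<Sum>l=k..n+1. \<Sum>i=k..min l n. g k l i) =
          (\<Sum>l\<in>{k..n+1}. \<Sum>i\<in>{i. i \<in> {k..n} \<and> i \<le> l}. g k l i)"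
      by (intro sum.cong) auto
    also have "\<dots> = (\<Sum>i\<in>{k..n}. \<Sum>l\<in>{l. l \<in> {k..n+1} \<and> i \<le> l}. g k l i)"
      by (rule sum.swap_restrict) simp_all
    also have "\<dots> = (\<Sum>i=k..n. \<Sum>l=i..n+1. g k l i)"
      by (intro sum.cong) auto
    finally show ?thesis .
  qed
  have "(\<Sum>k=1..n. \<Sum>l=k..n+1. \<Sum>i=k..min l n. g k l i) =
        (\<Sum>k=1..n. \<Sum>i=k..n. \<Sum>l=i..n+1. g k l i)"
    by (simp only: inner)
  also have "\<dots> = (\<Sum>i=1..n. \<Sum>k=1..i. \<Sum>l=i..n+1. g k l i)"
    by (rule sum_triangle_swap)
  finally show ?thesis .
qed

lemma sum_mult_increments:
  fixes P w :: "nat \<Rightarrow> 'a::comm_ring"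
  shows "(\<Sum>i=1..Suc m. P i * (w (i+1) - w i)) =
         P (Suc m) * w (m+2) - P 1 * w 1 - (\<Sum>i=1..m. (P (i+1) - P i) * w (i+1))"
  by (induction m) (simp_all add: algebra_simps)

section \<open>Block labelings\<close>

(* L i is the index l of the dual price pi_coef i l used in period i. A label l > i is passed on
   to period i + 1, so the periods with label l form a block ending at min l n. *)
definition block_labeling :: "nat \<Rightarrow> (nat \<Rightarrow> nat) \<Rightarrow> bool" where
  "block_labeling n L \<longleftrightarrow> (\<forall>i\<in>{1..n}. i \<le> L i \<and> L i \<le> n+1) \<and>
     (\<forall>i\<in>{1..n-1}. L i \<noteq> i \<longrightarrow> L (i+1) = L i)"

definition block_start :: "(nat \<Rightarrow> nat) \<Rightarrow> nat \<Rightarrow> bool" where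
  "block_start L k \<longleftrightarrow> k = 1 \<or> L (k-1) = k-1"

definition block_indicator :: "nat \<Rightarrow> (nat \<Rightarrow> nat) \<Rightarrow> nat \<Rightarrow> nat \<Rightarrow> real" where
  "block_indicator n L k l = of_bool (k \<in> {1..n} \<and> block_start L k \<and> l = L k)"

lemma block_labeling_id: "block_labeling n (\<lambda>i. i)"
  by (simp add: block_labeling_def)

lemma block_labeling_range:
  "block_labeling n L \<Longrightarrow> i \<in> {1..n} \<Longrightarrow> i \<le> L i \<and> L i \<le> n+1"
  by (simp add: block_labeling_def)

lemma block_labeling_const:
  assumes L: "block_labeling n L" and "1 \<le> k" "k \<le> j"
  shows "j \<le> n \<Longrightarrow> j \<le> L k \<Longrightarrow> L j = L k"
  using \<open>k \<le> j\<close>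
proof (induction j rule: dec_induct)
  case base
  then show ?case by simp
next
  case (step j)
  then have "L j = L k" "j \<in> {1..n-1}"
    using \<open>1 \<le> k\<close> by auto
  moreover have "L j \<noteq> j"
    using step.prems \<open>L j = L k\<close> by simp
  ultimately show ?case
    using L unfolding block_labeling_def by fastforce
qed

lemma block_start_exists:
  assumes L: "block_labeling n L" and i: "i \<in> {1..n}"
  shows "\<exists>k\<in>{1..i}. block_start L k \<and> L k = L i"
proof -
  have "1 \<le> i" using i by simp
  then show ?thesis
    using i
  proof (induction i rule: dec_induct)
    case base
    then show ?case by (auto simp: block_start_def)
  next
    case (step i)
    show ?case
    proof (cases "L i = i")
      case True
      then show ?thesis
        by (intro bexI[of _ "Suc i"]) (auto simp: block_start_def)
    next
      case False
      then have "L (Suc i) = L i"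
        using L step unfolding block_labeling_def by auto
      then show ?thesis
        using step by fastforce
    qed
  qed
qed

lemma block_start_closes_earlier_blocks:
  assumes L: "block_labeling n L" and "1 \<le> a" "a < b" "b \<le> n" "block_start L b"
  shows "L a < b"
proof (rule ccontr)
  assume "\<not> L a < b"
  then have "L (b-1) = L a"
    using block_labeling_const[OF L, of a "b-1"] assms by auto
  moreover have "L (b-1) = b-1"
    using \<open>block_start L b\<close> assms(2,3) by (auto simp: block_start_def)
  ultimately show False
    using \<open>\<not> L a < b\<close> assms(2,3) by linarith
qed

lemma block_start_covering_iff:
  assumes L: "block_labeling n L" and i: "i \<in> {1..n}"
    and k0: "k0 \<in> {1..i}" "block_start L k0" "L k0 = L i" and k: "k \<in> {1..i}"
  shows "block_start L k \<and> i \<le> L k \<longleftrightarrow> k = k0"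
proof
  assume *: "block_start L k \<and> i \<le> L k"
  show "k = k0"
  proof (rule ccontr)
    assume "k \<noteq> k0"
    then consider "k < k0" | "k0 < k" by linarith
    then show False
    proof cases
      case 1
      then show False
        using block_start_closes_earlier_blocks[OF L, of k k0] k k0 i * by auto
    next
      case 2
      then show False
        using block_start_closes_earlier_blocks[OF L, of k0 k] k k0 i * block_labeling_range[OF L i]
        by auto
    qed
  qed
qed (use k0 i block_labeling_range[OF L i] in auto)

lemma block_indicator_cover_sum:
  assumes L: "block_labeling n L" and i: "i \<in> {1..n}"
  shows "(\<Sum>k=1..i. \<Sum>l=i..n+1. block_indicator n L k l * h l) = h (L i)"
proof -
  obtain k0 where k0: "k0 \<in> {1..i}" "block_start L k0" "L k0 = L i"
    using block_start_exists[OF L i] by blast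
  have "(\<Sum>l=i..n+1. block_indicator n L k l * h l) = (if k = k0 then h (L i) else 0)"
    if k: "k \<in> {1..i}" for k
  proof -
    have "k \<in> {1..n}" "L k \<le> n+1"
      using block_labeling_range[OF L, of k] k i by auto
    then have "(\<Sum>l=i..n+1. block_indicator n L k l * h l) =
               (\<Sum>l=i..n+1. if l = L k then (if block_start L k then h l else 0) else 0)"
      by (intro sum.cong) (auto simp: block_indicator_def)
    also have "\<dots> = (if block_start L k \<and> i \<le> L k then h (L k) else 0)"
      using \<open>L k \<le> n+1\<close> by (simp add: sum.delta)
    finally show ?thesis
      using block_start_covering_iff[OF L i k0 k] k0 by auto
  qed
  then have "(\<Sum>k=1..i. \<Sum>l=i..n+1. block_indicator n L k l * h l) =
             (\<Sum>k=1..i. if k = k0 then h (L i) else 0)"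
    by (intro sum.cong) auto
  also have "\<dots> = h (L i)"
    using k0 by simp
  finally show ?thesis .
qed

definition labeling_value :: "(nat \<Rightarrow> nat \<Rightarrow> real) \<Rightarrow> nat \<Rightarrow> (nat \<Rightarrow> nat) \<Rightarrow> nat \<Rightarrow> real" where
  "labeling_value z n L k = (\<Sum>i=k..n. z i (L i))"

definition best_labeling_value :: "(nat \<Rightarrow> nat \<Rightarrow> real) \<Rightarrow> nat \<Rightarrow> nat \<Rightarrow> real" where
  "best_labeling_value z n k = Max {labeling_value z n L k | L. block_labeling n L}"

lemma finite_labeling_values:
  assumes "1 \<le> k"
  shows "finite {labeling_value z n L k | L. block_labeling n L}"
proof -
  have "{labeling_value z n L k | L. block_labeling n L} \<subseteq>
        (\<lambda>L. labeling_value z n L k) ` (PiE {1..n} (\<lambda>_. {0..n+1}))"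
  proof clarify
    fix L assume L: "block_labeling n L"
    have "restrict L {1..n} \<in> PiE {1..n} (\<lambda>_. {0..n+1})"
      using L by (auto simp: block_labeling_def)
    moreover have "labeling_value z n L k = labeling_value z n (restrict L {1..n}) k"
      unfolding labeling_value_def using assms by (intro sum.cong) auto
    ultimately show "labeling_value z n L k \<in> (\<lambda>L. labeling_value z n L k) ` (PiE {1..n} (\<lambda>_. {0..n+1}))"
      by blast
  qed
  then show ?thesis
    by (rule finite_subset) (intro finite_imageI finite_PiE; simp)
qed

lemma labeling_value_le_best:
  "1 \<le> k \<Longrightarrow> block_labeling n L \<Longrightarrow> labeling_value z n L k \<le> best_labeling_value z n k"
  unfolding best_labeling_value_def by (rule Max_ge) (auto intro: finite_labeling_values)

lemma best_labeling_value_attained: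
  assumes "1 \<le> k"
  obtains L where "block_labeling n L" "best_labeling_value z n k = labeling_value z n L k"
proof -
  have "best_labeling_value z n k \<in> {labeling_value z n L k | L. block_labeling n L}"
    unfolding best_labeling_value_def using finite_labeling_values[OF assms] block_labeling_id
    by (intro Max_in) auto
  then show ?thesis using that by blast
qed

lemma best_labeling_value_beyond:
  assumes "n < k"
  shows "best_labeling_value z n k = 0"
proof -
  have "{labeling_value z n L k | L. block_labeling n L} = {0}"
    using assms block_labeling_id by (auto simp: labeling_value_def)
  then show ?thesis
    by (simp add: best_labeling_value_def)
qed

lemma block_labeling_prepend_block:
  assumes L: "block_labeling n L" and "1 \<le> k" "k \<le> l" "l \<le> n+1"
  shows "block_labeling n (\<lambda>j. if j < k then j else if j \<le> l then l else L j)"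
  using assms unfolding block_labeling_def by (auto simp: not_less)

lemma best_labeling_value_block_step:
  assumes "k \<in> {1..n}" "k \<le> l" "l \<le> n+1"
  shows "(\<Sum>i=k..min l n. z i l) + best_labeling_value z n (l+1) \<le> best_labeling_value z n k"
proof -
  obtain L where L: "block_labeling n L"
    and best: "best_labeling_value z n (l+1) = labeling_value z n L (l+1)"
    using best_labeling_value_attained[of "l+1"] by auto
  define L' where "L' j = (if j < k then j else if j \<le> l then l else L j)" for j
  have "labeling_value z n L' k = (\<Sum>i=k..min l n. z i l) + labeling_value z n L (l+1)"
  proof -
    have "{k..n} = {k..min l n} \<union> {l+1..n}" "{k..min l n} \<inter> {l+1..n} = {}"
      using assms by auto
    then have "labeling_value z n L' k = (\<Sum>i=k..min l n. z i (L' i)) + (\<Sum>i=l+1..n. z i (L' i))"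
      unfolding labeling_value_def by (simp add: sum.union_disjoint)
    also have "\<dots> = (\<Sum>i=k..min l n. z i l) + labeling_value z n L (l+1)"
      unfolding labeling_value_def L'_def using assms by (intro arg_cong2[where f = "(+)"] sum.cong) auto
    finally show ?thesis .
  qed
  moreover have "labeling_value z n L' k \<le> best_labeling_value z n k"
    using labeling_value_le_best block_labeling_prepend_block[OF L] assms
    unfolding L'_def by auto
  ultimately show ?thesis
    using best by simp
qed

section \<open>The linear program in t\<close>

lemma t_feasible_block_indicator:
  assumes L: "block_labeling n L"
  shows "t_feasible n (block_indicator n L)"
  unfolding t_feasible_def
  using block_indicator_cover_sum[OF L, where h = "\<lambda>_. 1"] by (auto simp: block_indicator_def)

lemma t_obj_block_indicator:
  assumes L: "block_labeling n L"
  shows "t_obj n z (block_indicator n L) = labeling_value z n L 1"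
proof -
  have "t_obj n z (block_indicator n L) =
        (\<Sum>k=1..n. \<Sum>l=k..n+1. \<Sum>i=k..min l n. z i l * block_indicator n L k l)"
    unfolding t_obj_def by (simp only: sum_distrib_right)
  also have "\<dots> = (\<Sum>i=1..n. \<Sum>k=1..i. \<Sum>l=i..n+1. block_indicator n L k l * z i l)"
    by (simp only: sum_interval_cover_swap mult.commute)
  also have "\<dots> = (\<Sum>i=1..n. z i (L i))"
    using block_indicator_cover_sum[OF L] by (intro sum.cong) auto
  finally show ?thesis
    by (simp add: labeling_value_def)
qed

(* The increments of the best values from period k on are a dual solution of the LP in t. *)
lemma t_obj_le_best_labeling_value:
  assumes t: "t_feasible n t"
  shows "t_obj n z t \<le> best_labeling_value z n 1"
proof -
  define y where "y i = best_labeling_value z n i - best_labeling_value z n (i+1)" for i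
  have tel: "(\<Sum>i=k..m. y i) = best_labeling_value z n k - best_labeling_value z n (m+1)"
    if "k \<le> Suc m" for k m
    using sum_Suc_diff[OF that, of "\<lambda>i. - best_labeling_value z n i"] by (simp add: y_def)
  have "t_obj n z t \<le> (\<Sum>k=1..n. \<Sum>l=k..n+1. (\<Sum>i=k..min l n. y i) * t k l)"
    unfolding t_obj_def
  proof (intro sum_mono)
    fix k l assume k: "k \<in> {1..n}" and l: "l \<in> {k..n+1}"
    have "best_labeling_value z n (l+1) = best_labeling_value z n (min l n + 1)"
      using best_labeling_value_beyond by (cases "l \<le> n") auto
    then have "(\<Sum>i=k..min l n. z i l) \<le> (\<Sum>i=k..min l n. y i)"
      using best_labeling_value_block_step[OF k, of l z] k l tel[of k "min l n"] by auto
    moreover have "0 \<le> t k l"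
      using t k l by (simp add: t_feasible_def)
    ultimately show "(\<Sum>i=k..min l n. z i l) * t k l \<le> (\<Sum>i=k..min l n. y i) * t k l"
      by (rule mult_right_mono)
  qed
  also have "\<dots> = (\<Sum>i=1..n. y i * (\<Sum>k=1..i. \<Sum>l=i..n+1. t k l))"
    by (simp only: sum_distrib_right sum_distrib_left sum_interval_cover_swap)
  also have "\<dots> = (\<Sum>i=1..n. y i)"
    using t by (simp add: t_feasible_def)
  also have "\<dots> = best_labeling_value z n 1"
    using tel[of 1 n] best_labeling_value_beyond[of n "n+1"] by simp
  finally show ?thesis .
qed

lemma t_lp_max_eq_best_labeling_value:
  "\<exists>t. t_feasible n t \<and> t_obj n z t = best_labeling_value z n 1 \<and>
       (\<forall>t'. t_feasible n t' \<longrightarrow> t_obj n z t' \<le> best_labeling_value z n 1)"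
proof -
  obtain L where "block_labeling n L" "best_labeling_value z n 1 = labeling_value z n L 1"
    using best_labeling_value_attained by blast
  then show ?thesis
    using t_feasible_block_indicator t_obj_block_indicator t_obj_le_best_labeling_value by metis
qed

section \<open>Dual prices of the linear program defining f\<close>

lemma lp_feasible_flow:
  assumes "lp_feasible n s u w v" "i \<in> {1..n}"
  shows "u i - s i = w (i+1) - w i - v i"
proof -
  have "\<forall>j\<in>{2..n+1}. w j - v (j-1) = u (j-1) + w (j-1) - s (j-1)"
    using assms(1) by (simp add: lp_feasible_def)
  moreover have "i+1 \<in> {2..n+1}"
    using assms(2) by simp
  ultimately show ?thesis
    by fastforce
qed

lemma lp_obj_dual_gap:
  assumes fe: "lp_feasible n s u w v" and n: "1 \<le> n"
  shows "lp_obj n c d C w v - (\<Sum>i=1..n. P i * (u i - s i)) =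
    (\<Sum>i=1..n. (d i + P i) * v i) + (C - P n) * w (n+1) +
    (\<Sum>i=1..n-1. (c (i+1) - P i + P (i+1)) * w (i+1))"
proof -
  obtain m where m: "n = Suc m"
    using n by (cases n) auto
  have w1: "w 1 = 0"
    using fe by (simp add: lp_feasible_def)
  have "(\<Sum>i=1..n. P i * (u i - s i)) = (\<Sum>i=1..n. P i * (w (i+1) - w i) - P i * v i)"
    by (intro sum.cong refl) (simp only: lp_feasible_flow[OF fe] right_diff_distrib)
  also have "\<dots> = P n * w (n+1) - (\<Sum>i=1..m. (P (i+1) - P i) * w (i+1)) - (\<Sum>i=1..n. P i * v i)"
    by (simp only: sum_subtractf m sum_mult_increments w1) simp
  finally have prices: "(\<Sum>i=1..n. P i * (u i - s i)) = \<dots>" .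
  have "(\<Sum>i=1..n. c i * w i) = c 1 * w 1 + (\<Sum>i=Suc 1..Suc m. c i * w i)"
    unfolding m by (rule sum.atLeast_Suc_atMost) simp
  also have "\<dots> = (\<Sum>i=1..m. c (i+1) * w (i+1))"
    by (simp only: w1 sum.shift_bounds_cl_Suc_ivl) simp
  finally have holding: "(\<Sum>i=1..n. c i * w i) = (\<Sum>i=1..m. c (i+1) * w (i+1))" .
  have "(\<Sum>i=1..n-1. (c (i+1) - P i + P (i+1)) * w (i+1)) =
        (\<Sum>i=1..m. c (i+1) * w (i+1) + (P (i+1) - P i) * w (i+1))"
    by (simp add: m algebra_simps)
  also have "\<dots> = (\<Sum>i=1..m. c (i+1) * w (i+1)) + (\<Sum>i=1..m. (P (i+1) - P i) * w (i+1))"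
    by (rule sum.distrib)
  finally have links: "(\<Sum>i=1..n-1. (c (i+1) - P i + P (i+1)) * w (i+1)) = \<dots>" .
  have "lp_obj n c d C w v = (\<Sum>i=1..n. c i * w i) + (\<Sum>i=1..n. d i * v i) + C * w (n+1)"
    by (simp add: lp_obj_def sum.distrib)
  moreover have "(\<Sum>i=1..n. (d i + P i) * v i) = (\<Sum>i=1..n. d i * v i) + (\<Sum>i=1..n. P i * v i)"
    by (simp add: distrib_right sum.distrib)
  moreover have "(C - P n) * w (n+1) = C * w (n+1) - P n * w (n+1)"
    by (simp add: left_diff_distrib)
  ultimately show ?thesis
    using prices holding links by linarith
qed

lemma pi_coef_diag: "i \<le> n \<Longrightarrow> pi_coef n c d C i i = - d i"
  by (simp add: pi_coef_def)

lemma pi_coef_overtime: "pi_coef n c d C n (n+1) = C"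
  by (simp add: pi_coef_def)

lemma pi_coef_decrement:
  assumes "i+1 \<le> l" "l \<le> n+1" "i+1 \<le> n"
  shows "pi_coef n c d C i l - pi_coef n c d C (i+1) l = c (i+1)"
proof -
  have "(\<Sum>q=i+1..m. c q) = c (i+1) + (\<Sum>q=i+2..m. c q)" if "i+1 \<le> m" for m
    using that by (simp add: sum.atLeast_Suc_atMost)
  then show ?thesis
    using assms by (auto simp: pi_coef_def)
qed

lemma cSup_continuous_interval:
  fixes g :: "real \<Rightarrow> real"
  assumes "a \<le> b" "continuous_on {a..b} g"
  obtains x where "x \<in> {a..b}" "Sup {g y | y. a \<le> y \<and> y \<le> b} = g x" "\<forall>y\<in>{a..b}. g y \<le> g x"
proof -
  obtain x where x: "x \<in> {a..b}" "\<forall>y\<in>{a..b}. g y \<le> g x"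
    using continuous_attains_sup[of "{a..b}" g] assms by auto
  moreover have "Sup {g y | y. a \<le> y \<and> y \<le> b} = g x"
    using x by (intro cSup_eq_maximum) auto
  ultimately show ?thesis using that by blast
qed

lemma z_coef_attained:
  fixes n c d C uL uU uhat p \<rho> s i l
  defines "g \<equiv> \<lambda>x. pi_coef n c d C i l * (x - s i) - \<rho> * \<bar>x - uhat i\<bar> powr p"
  assumes "uL i \<le> uU i" "0 < p"
  obtains x where "x \<in> {uL i..uU i}" "z_coef n c d C uL uU uhat p \<rho> s i l = g x"
    "\<forall>y\<in>{uL i..uU i}. g y \<le> g x"
proof -
  let ?h = "\<lambda>x. pi_coef n c d C i l * x - \<rho> * \<bar>x - uhat i\<bar> powr p"
  have "continuous_on {uL i..uU i} (\<lambda>x. \<bar>x - uhat i\<bar> powr p)"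
    using \<open>0 < p\<close> by (intro continuous_on_powr') (auto intro!: continuous_intros)
  then have "continuous_on {uL i..uU i} ?h"
    by (intro continuous_on_diff continuous_on_mult continuous_on_const continuous_on_id)
  then obtain x where "x \<in> {uL i..uU i}" "Sup {?h y | y. uL i \<le> y \<and> y \<le> uU i} = ?h x"
    "\<forall>y\<in>{uL i..uU i}. ?h y \<le> ?h x"
    using cSup_continuous_interval \<open>uL i \<le> uU i\<close> by blast
  then show ?thesis
    using that unfolding z_coef_def g_def by (auto simp: algebra_simps)
qed

lemma z_coef_ge:
  assumes "uL i \<le> y" "y \<le> uU i" "0 < p"
  shows "pi_coef n c d C i l * (y - s i) - \<rho> * \<bar>y - uhat i\<bar> powr p
           \<le> z_coef n c d C uL uU uhat p \<rho> s i l"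
proof -
  have "uL i \<le> uU i"
    using assms by linarith
  then obtain x where "x \<in> {uL i..uU i}" "z_coef n c d C uL uU uhat p \<rho> s i l =
                    pi_coef n c d C i l * (x - s i) - \<rho> * \<bar>x - uhat i\<bar> powr p"
    "\<forall>y\<in>{uL i..uU i}. pi_coef n c d C i l * (y - s i) - \<rho> * \<bar>y - uhat i\<bar> powr p
                        \<le> pi_coef n c d C i l * (x - s i) - \<rho> * \<bar>x - uhat i\<bar> powr p"
    using \<open>0 < p\<close> by (rule z_coef_attained)
  then show ?thesis
    using assms by auto
qed

section \<open>The value of f\<close>

(* Lindley's recursion and its idle times form an optimal solution (w, v) of the LP defining f. *)
primrec lindley_wait :: "(nat \<Rightarrow> real) \<Rightarrow> (nat \<Rightarrow> real) \<Rightarrow> nat \<Rightarrow> real" where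
  "lindley_wait s u 0 = 0"
| "lindley_wait s u (Suc i) = (if i = 0 then 0 else max 0 (lindley_wait s u i + u i - s i))"

definition idle_time :: "(nat \<Rightarrow> real) \<Rightarrow> (nat \<Rightarrow> real) \<Rightarrow> nat \<Rightarrow> real" where
  "idle_time s u i = max 0 (s i - u i - lindley_wait s u i)"

definition busy_end :: "(nat \<Rightarrow> real) \<Rightarrow> nat \<Rightarrow> nat \<Rightarrow> nat" where
  "busy_end w n i = Min ({j\<in>{i..n}. w (j+1) = 0} \<union> {n+1})"

lemma lindley_wait_nonneg: "0 \<le> lindley_wait s u i"
  by (cases i) auto

lemma lp_feasible_lindley: "lp_feasible n s u (lindley_wait s u) (idle_time s u)"
  unfolding lp_feasible_def
proof (intro conjI ballI)
  fix i assume "i \<in> {2..n+1}"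
  then obtain j where "i = Suc j" "1 \<le> j"
    by (cases i) auto
  then show "lindley_wait s u i - idle_time s u (i-1) = u (i-1) + lindley_wait s u (i-1) - s (i-1)"
    by (simp add: idle_time_def)
qed (auto simp: idle_time_def lindley_wait_nonneg)

lemma busy_end_range:
  assumes "i \<le> n+1"
  shows "i \<le> busy_end w n i \<and> busy_end w n i \<le> n+1"
proof -
  have "busy_end w n i \<in> {j\<in>{i..n}. w (j+1) = 0} \<union> {n+1}"
    unfolding busy_end_def by (intro Min_in) auto
  moreover have "busy_end w n i \<le> n+1"
    unfolding busy_end_def by (intro Min_le) auto
  ultimately show ?thesis
    using assms by auto
qed

lemma busy_end_eq_self: "i \<le> n \<Longrightarrow> busy_end w n i = i \<longleftrightarrow> w (i+1) = 0"
proof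
  assume "i \<le> n" "busy_end w n i = i"
  moreover have "busy_end w n i \<in> {j\<in>{i..n}. w (j+1) = 0} \<union> {n+1}"
    unfolding busy_end_def by (intro Min_in) auto
  ultimately show "w (i+1) = 0"
    by auto
next
  assume "i \<le> n" "w (i+1) = 0"
  then show "busy_end w n i = i"
    unfolding busy_end_def by (intro Min_eqI) auto
qed

lemma busy_end_Suc:
  assumes "w (i+1) \<noteq> 0"
  shows "busy_end w n (i+1) = busy_end w n i"
proof -
  have "{j\<in>{i+1..n}. w (j+1) = 0} = {j\<in>{i..n}. w (j+1) = 0}"
    using assms by (auto simp: Suc_le_eq le_less)
  then show ?thesis
    by (simp add: busy_end_def)
qed

lemma busy_end_last:
  assumes "w (n+1) \<noteq> 0"
  shows "busy_end w n n = n+1"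
  unfolding busy_end_def using assms by (intro Min_eqI) auto

lemma block_labeling_busy_end: "block_labeling n (busy_end w n)"
  unfolding block_labeling_def
proof (intro conjI ballI impI)
  fix i assume "i \<in> {1..n-1}" "busy_end w n i \<noteq> i"
  moreover have "i \<le> n"
    using \<open>i \<in> {1..n-1}\<close> by auto
  ultimately have "w (i+1) \<noteq> 0"
    using busy_end_eq_self[of i n w] by auto
  then show "busy_end w n (i+1) = busy_end w n i"
    by (rule busy_end_Suc)
qed (use busy_end_range in auto)

locale lp_costs =
  fixes n :: nat and c d :: "nat \<Rightarrow> real" and C :: real
  assumes n_pos: "1 \<le> n"
    and c_nonneg: "\<forall>i\<in>{1..n}. 0 \<le> c i" and d_nonneg: "\<forall>i\<in>{1..n}. 0 \<le> d i"
    and C_nonneg: "0 \<le> C"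
    and d_increment_le_c: "\<forall>i\<in>{1..n-1}. d (i+1) - d i \<le> c (i+1)"
begin

abbreviation \<pi> :: "nat \<Rightarrow> nat \<Rightarrow> real" where
  "\<pi> \<equiv> pi_coef n c d C"

lemma d_increase_le_sum_c:
  assumes "1 \<le> i" "i \<le> l"
  shows "l \<le> n \<Longrightarrow> d l - d i \<le> (\<Sum>q=i+1..l. c q)"
  using \<open>i \<le> l\<close>
proof (induction l rule: dec_induct)
  case base
  then show ?case by simp
next
  case (step l)
  then have "d (Suc l) - d l \<le> c (Suc l)"
    using d_increment_le_c assms(1) by fastforce
  then show ?case
    using step by (simp add: sum.cl_ivl_Suc)
qed

lemma pi_coef_ge_neg_d:
  assumes "i \<in> {1..n}" "i \<le> l" "l \<le> n+1"
  shows "- d i \<le> \<pi> i l"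
proof (cases "l \<le> n")
  case True
  then show ?thesis
    using d_increase_le_sum_c[of i l] assms by (simp add: pi_coef_def)
next
  case False
  have "0 \<le> (\<Sum>q=i+1..n. c q)"
    using c_nonneg assms by (intro sum_nonneg) auto
  moreover have "0 \<le> d i"
    using d_nonneg assms by auto
  ultimately show ?thesis
    using False C_nonneg by (simp add: pi_coef_def)
qed

lemma labeling_price_ge_neg_d:
  assumes "block_labeling n L" "i \<in> {1..n}"
  shows "- d i \<le> \<pi> i (L i)"
  using block_labeling_range[OF assms] assms(2) by (intro pi_coef_ge_neg_d) auto

lemma labeling_price_drop_le_c:
  assumes L: "block_labeling n L" and i: "i \<in> {1..n-1}"
  shows "\<pi> i (L i) - \<pi> (i+1) (L (i+1)) \<le> c (i+1)"
proof -
  have "i \<in> {1..n}" "i+1 \<in> {1..n}"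
    using i by auto
  show ?thesis
  proof (cases "L i = i")
    case True
    have "\<pi> i (L i) = - d i"
      using True pi_coef_diag[of i n c d C] \<open>i \<in> {1..n}\<close> by simp
    moreover have "- d (i+1) \<le> \<pi> (i+1) (L (i+1))"
      using labeling_price_ge_neg_d[OF L \<open>i+1 \<in> {1..n}\<close>] .
    moreover have "d (i+1) - d i \<le> c (i+1)"
      using d_increment_le_c i by blast
    ultimately show ?thesis
      by linarith
  next
    case False
    then have "L (i+1) = L i"
      using L i unfolding block_labeling_def by blast
    moreover have "i+1 \<le> L i" "L i \<le> n+1"
      using block_labeling_range[OF L \<open>i \<in> {1..n}\<close>] False by auto
    ultimately show ?thesis
      using pi_coef_decrement[of i "L i" n c d C] \<open>i+1 \<in> {1..n}\<close> by simp
  qed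
qed

lemma labeling_price_last_le_C:
  assumes L: "block_labeling n L"
  shows "\<pi> n (L n) \<le> C"
proof -
  have "L n = n \<or> L n = n+1"
    using block_labeling_range[OF L, of n] n_pos by auto
  moreover have "0 \<le> d n"
    using d_nonneg n_pos by simp
  ultimately show ?thesis
    using pi_coef_diag[of n n c d C] pi_coef_overtime[of n c d C] C_nonneg by auto
qed

lemma labeling_dual_value_le_lp_obj:
  assumes L: "block_labeling n L" and fe: "lp_feasible n s u w v"
  shows "(\<Sum>i=1..n. \<pi> i (L i) * (u i - s i)) \<le> lp_obj n c d C w v"
proof -
  have v: "0 \<le> v i" if "i \<in> {1..n}" for i
    using fe that by (simp add: lp_feasible_def)
  have w: "0 \<le> w i" if "i \<in> {1..n+1}" for i
    using fe that by (simp add: lp_feasible_def)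
  have "0 \<le> (\<Sum>i=1..n. (d i + \<pi> i (L i)) * v i)"
  proof (rule sum_nonneg)
    fix i assume i: "i \<in> {1..n}"
    show "0 \<le> (d i + \<pi> i (L i)) * v i"
      using labeling_price_ge_neg_d[OF L i] v[OF i] by simp
  qed
  moreover have "0 \<le> (C - \<pi> n (L n)) * w (n+1)"
    using labeling_price_last_le_C[OF L] w[of "n+1"] by simp
  moreover have "0 \<le> (\<Sum>i=1..n-1. (c (i+1) - \<pi> i (L i) + \<pi> (i+1) (L (i+1))) * w (i+1))"
  proof (rule sum_nonneg)
    fix i assume i: "i \<in> {1..n-1}"
    then have "0 \<le> w (i+1)"
      by (intro w) auto
    then show "0 \<le> (c (i+1) - \<pi> i (L i) + \<pi> (i+1) (L (i+1))) * w (i+1)"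
      using labeling_price_drop_le_c[OF L i] by simp
  qed
  ultimately show ?thesis
    using lp_obj_dual_gap[OF fe n_pos, of c d C "\<lambda>i. \<pi> i (L i)"] by linarith
qed

lemma busy_end_price_closed:
  assumes "i \<in> {1..n}" "w (i+1) = 0"
  shows "\<pi> i (busy_end w n i) = - d i"
  using assms busy_end_eq_self[of i n w] pi_coef_diag[of i n c d C] by simp

lemma busy_end_price_decrement:
  assumes "i \<in> {1..n-1}" "w (i+1) \<noteq> 0"
  shows "\<pi> i (busy_end w n i) - \<pi> (i+1) (busy_end w n (i+1)) = c (i+1)"
proof -
  have "i+1 \<le> n"
    using assms(1) by auto
  then have "busy_end w n (i+1) = busy_end w n i" "busy_end w n i \<noteq> i"
    using busy_end_Suc[of w i n] busy_end_eq_self[of i n w] assms(2) by auto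
  moreover have "i \<le> busy_end w n i" "busy_end w n i \<le> n+1"
    using busy_end_range[of i n w] \<open>i+1 \<le> n\<close> by auto
  ultimately show ?thesis
    using pi_coef_decrement[of i "busy_end w n i" n c d C] \<open>i+1 \<le> n\<close> by auto
qed

(* Complementary slackness: each reduced cost in lp_obj_dual_gap vanishes where its variable is positive. *)
lemma lp_obj_lindley:
  "lp_obj n c d C (lindley_wait s u) (idle_time s u) =
   (\<Sum>i=1..n. \<pi> i (busy_end (lindley_wait s u) n i) * (u i - s i))"
proof -
  define w where "w = lindley_wait s u"
  define L where "L = busy_end w n"
  have "(\<Sum>i=1..n. (d i + \<pi> i (L i)) * idle_time s u i) = 0"
  proof (intro sum.neutral ballI)
    fix i assume i: "i \<in> {1..n}"
    show "(d i + \<pi> i (L i)) * idle_time s u i = 0"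
    proof (cases "idle_time s u i = 0")
      case False
      then have "w (i+1) = 0"
        using i by (simp add: w_def idle_time_def)
      then show ?thesis
        using busy_end_price_closed[OF i] by (simp add: L_def)
    qed simp
  qed
  moreover have "(C - \<pi> n (L n)) * w (n+1) = 0"
    using busy_end_last[of w n] pi_coef_overtime by (cases "w (n+1) = 0") (auto simp: L_def)
  moreover have "(\<Sum>i=1..n-1. (c (i+1) - \<pi> i (L i) + \<pi> (i+1) (L (i+1))) * w (i+1)) = 0"
  proof (intro sum.neutral ballI)
    fix i assume i: "i \<in> {1..n-1}"
    show "(c (i+1) - \<pi> i (L i) + \<pi> (i+1) (L (i+1))) * w (i+1) = 0"
      using busy_end_price_decrement[OF i, where w = w] by (cases "w (i+1) = 0") (auto simp: L_def)
  qed
  moreover have "lp_feasible n s u w (idle_time s u)"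
    unfolding w_def by (rule lp_feasible_lindley)
  ultimately have "lp_obj n c d C w (idle_time s u) = (\<Sum>i=1..n. \<pi> i (L i) * (u i - s i))"
    using lp_obj_dual_gap[of n s u w "idle_time s u" c d C "\<lambda>i. \<pi> i (L i)"] n_pos by linarith
  then show ?thesis
    by (simp only: w_def L_def)
qed

lemma f_val_eq_lindley:
  "f_val n c d C s u = (\<Sum>i=1..n. \<pi> i (busy_end (lindley_wait s u) n i) * (u i - s i))"
  unfolding f_val_def
proof (rule cInf_eq_minimum)
  have "lp_obj n c d C (lindley_wait s u) (idle_time s u) \<in>
        {lp_obj n c d C w v | w v. lp_feasible n s u w v}"
    using lp_feasible_lindley by blast
  then show "(\<Sum>i=1..n. \<pi> i (busy_end (lindley_wait s u) n i) * (u i - s i)) \<in>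
             {lp_obj n c d C w v | w v. lp_feasible n s u w v}"
    by (simp only: lp_obj_lindley)
next
  fix x assume "x \<in> {lp_obj n c d C w v | w v. lp_feasible n s u w v}"
  then obtain w v where "x = lp_obj n c d C w v" "lp_feasible n s u w v"
    by blast
  then show "(\<Sum>i=1..n. \<pi> i (busy_end (lindley_wait s u) n i) * (u i - s i)) \<le> x"
    using labeling_dual_value_le_lp_obj[OF block_labeling_busy_end] by simp
qed

lemma f_val_attained:
  obtains L where "block_labeling n L" "f_val n c d C s u = (\<Sum>i=1..n. \<pi> i (L i) * (u i - s i))"
  by (rule that[OF block_labeling_busy_end f_val_eq_lindley])

lemma labeling_dual_value_le_f_val:
  assumes "block_labeling n L"
  shows "(\<Sum>i=1..n. \<pi> i (L i) * (u i - s i)) \<le> f_val n c d C s u"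
proof -
  have "(\<Sum>i=1..n. \<pi> i (L i) * (u i - s i)) \<le> lp_obj n c d C (lindley_wait s u) (idle_time s u)"
    by (rule labeling_dual_value_le_lp_obj[OF assms lp_feasible_lindley])
  then show ?thesis
    by (simp only: f_val_eq_lindley lp_obj_lindley)
qed

lemma penalized_f_val_le_best_labeling_value:
  assumes u: "\<forall>i\<in>{1..n}. uL i \<le> u i \<and> u i \<le> uU i" and p: "0 < p"
  shows "f_val n c d C s u - \<rho> * (\<Sum>i=1..n. \<bar>u i - uhat i\<bar> powr p)
           \<le> best_labeling_value (z_coef n c d C uL uU uhat p \<rho> s) n 1"
proof -
  obtain L where L: "block_labeling n L" "f_val n c d C s u = (\<Sum>i=1..n. \<pi> i (L i) * (u i - s i))"
    by (rule f_val_attained)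
  have "f_val n c d C s u - \<rho> * (\<Sum>i=1..n. \<bar>u i - uhat i\<bar> powr p) =
        (\<Sum>i=1..n. \<pi> i (L i) * (u i - s i) - \<rho> * \<bar>u i - uhat i\<bar> powr p)"
    using L(2) by (simp add: sum_subtractf sum_distrib_left)
  also have "\<dots> \<le> (\<Sum>i=1..n. z_coef n c d C uL uU uhat p \<rho> s i (L i))"
    using u p by (intro sum_mono z_coef_ge) auto
  also have "\<dots> \<le> best_labeling_value (z_coef n c d C uL uU uhat p \<rho> s) n 1"
    using labeling_value_le_best[OF _ L(1), of 1] by (simp add: labeling_value_def)
  finally show ?thesis .
qed

lemma best_labeling_value_le_penalized_f_val:
  assumes box: "\<forall>i\<in>{1..n}. uL i \<le> uU i" and p: "0 < p"
  obtains u where "\<forall>i\<in>{1..n}. uL i \<le> u i \<and> u i \<le> uU i"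
    "best_labeling_value (z_coef n c d C uL uU uhat p \<rho> s) n 1
       \<le> f_val n c d C s u - \<rho> * (\<Sum>i=1..n. \<bar>u i - uhat i\<bar> powr p)"
proof -
  define z where "z = z_coef n c d C uL uU uhat p \<rho> s"
  obtain L where L: "block_labeling n L" "best_labeling_value z n 1 = labeling_value z n L 1"
    using best_labeling_value_attained by blast
  have "\<forall>i\<in>{1..n}. \<exists>x. uL i \<le> x \<and> x \<le> uU i \<and>
          z i (L i) = \<pi> i (L i) * (x - s i) - \<rho> * \<bar>x - uhat i\<bar> powr p"
  proof
    fix i assume "i \<in> {1..n}"
    then have "uL i \<le> uU i"
      using box by blast
    then obtain x where "x \<in> {uL i..uU i}"
      "z i (L i) = \<pi> i (L i) * (x - s i) - \<rho> * \<bar>x - uhat i\<bar> powr p"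
      unfolding z_def using p
      by (rule z_coef_attained[where n = n and c = c and d = d and C = C and uhat = uhat
            and \<rho> = \<rho> and s = s and l = "L i"]) blast
    then show "\<exists>x. uL i \<le> x \<and> x \<le> uU i \<and>
                 z i (L i) = \<pi> i (L i) * (x - s i) - \<rho> * \<bar>x - uhat i\<bar> powr p"
      by auto
  qed
  then obtain u where u: "\<forall>i\<in>{1..n}. uL i \<le> u i \<and> u i \<le> uU i \<and>
      z i (L i) = \<pi> i (L i) * (u i - s i) - \<rho> * \<bar>u i - uhat i\<bar> powr p"
    by (rule bchoice[elim_format]) blast
  have "best_labeling_value z n 1 =
        (\<Sum>i=1..n. \<pi> i (L i) * (u i - s i) - \<rho> * \<bar>u i - uhat i\<bar> powr p)"
    using L(2) u by (simp add: labeling_value_def)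
  also have "\<dots> = (\<Sum>i=1..n. \<pi> i (L i) * (u i - s i)) - \<rho> * (\<Sum>i=1..n. \<bar>u i - uhat i\<bar> powr p)"
    by (simp add: sum_subtractf sum_distrib_left)
  also have "\<dots> \<le> f_val n c d C s u - \<rho> * (\<Sum>i=1..n. \<bar>u i - uhat i\<bar> powr p)"
    using labeling_dual_value_le_f_val[OF L(1)] by simp
  finally show ?thesis
    using that u unfolding z_def by blast
qed

lemma omega_eq_best_labeling_value:
  assumes box: "\<forall>i\<in>{1..n}. uL i \<le> uU i" and p: "0 < p"
  shows "omega n c d C uL uU uhat p \<rho> s = best_labeling_value (z_coef n c d C uL uU uhat p \<rho> s) n 1"
  unfolding omega_def
proof (rule cSup_eq_maximum)
  obtain u where u: "\<forall>i\<in>{1..n}. uL i \<le> u i \<and> u i \<le> uU i"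
    and le: "best_labeling_value (z_coef n c d C uL uU uhat p \<rho> s) n 1
               \<le> f_val n c d C s u - \<rho> * (\<Sum>i=1..n. \<bar>u i - uhat i\<bar> powr p)"
    using best_labeling_value_le_penalized_f_val[OF box p] by blast
  have "best_labeling_value (z_coef n c d C uL uU uhat p \<rho> s) n 1
          = f_val n c d C s u - \<rho> * (\<Sum>i=1..n. \<bar>u i - uhat i\<bar> powr p)"
    using le penalized_f_val_le_best_labeling_value[OF u p, where s = s and \<rho> = \<rho> and uhat = uhat]
    by linarith
  then show "best_labeling_value (z_coef n c d C uL uU uhat p \<rho> s) n 1 \<in>
    {f_val n c d C s u - \<rho> * (\<Sum>i=1..n. \<bar>u i - uhat i\<bar> powr p) | u.
       \<forall>i\<in>{1..n}. uL i \<le> u i \<and> u i \<le> uU i}"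
    using u by blast
qed (use penalized_f_val_le_best_labeling_value p in blast)

end

theorem proposition2:
  fixes n :: nat and T C p \<rho> :: real
    and c d s uL uU uhat :: "nat \<Rightarrow> real"
  assumes n: "n \<ge> 1" and T: "T > 0"
    and s_nonneg: "\<forall>i\<in>{1..n}. s i \<ge> 0" and s_sum: "(\<Sum>i=1..n. s i) \<le> T"
    and c_nonneg: "\<forall>i\<in>{1..n}. c i \<ge> 0" and d_nonneg: "\<forall>i\<in>{1..n}. d i \<ge> 0"
    and C: "C \<ge> 0"
    and cd: "\<forall>i\<in>{1..n-1}. d (i+1) - d i \<le> c (i+1)"
    and box: "\<forall>i\<in>{1..n}. 0 \<le> uL i \<and> uL i < uU i"
    and uhat: "\<forall>i\<in>{1..n}. uL i \<le> uhat i \<and> uhat i \<le> uU i"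
    and p: "p \<ge> 1" and rho: "\<rho> \<ge> 0"
  shows "\<exists>t. t_feasible n t \<and>
           t_obj n (z_coef n c d C uL uU uhat p \<rho> s) t = omega n c d C uL uU uhat p \<rho> s \<and>
           (\<forall>t'. t_feasible n t' \<longrightarrow>
              t_obj n (z_coef n c d C uL uU uhat p \<rho> s) t' \<le> omega n c d C uL uU uhat p \<rho> s)"
proof -
  interpret lp_costs n c d C
    using n c_nonneg d_nonneg C cd by unfold_locales
  have "omega n c d C uL uU uhat p \<rho> s = best_labeling_value (z_coef n c d C uL uU uhat p \<rho> s) n 1"
    using box p by (intro omega_eq_best_labeling_value) auto
  then show ?thesis
    using t_lp_max_eq_best_labeling_value by simp
qed

end
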